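(* Let $\Delta\in\mathcal L(X)$ on a Hilbert space $X$ be such that $(\Delta^k)_{k\in\mathbb N}$ is power bounded, and fix $x\in X$. (a) If $\|\Delta^kx\|=o(k^{-\delta})$ as $k\to\infty$ for some $0<\delta\le1/2$, then $\lim_{r\downarrow1}\Lambda_\delta(r)\int_0^{2\pi}\|R(re^{i\theta},\Delta)x\|^2\,d\theta=0.$ ( * ) (b) If ( * ) holds for some $0<\delta<1/2$, then $\|\Delta^kx\|=o(k^{-\delta})$ as $k\to\infty$; if ( * ) holds for $\delta=1/2$, then $\|\Delta^kx\|=o\big(\sqrt{\log k/k}\big)$ as $k\to\infty$.
   Context: $\Lambda_\delta(r)=(r-1)^{1-2\delta}$ if $0<\delta<1/2$ and $\Lambda_\delta(r)=|\log(r-1)|^{-1}$ if $\delta=1/2$ (for $r>1$). Power bounded means $\sup_k\|\Delta^k\|<\infty$ (so the spectral radius is $\le1$ and $R(z,\Delta)=(zI-\Delta)^{-1}$ exists for $|z|>1$). $h(k)=o(g(k))$ means: for every $\varepsilon>0$, $h(k)\le\varepsilon g(k)$ for all sufficiently large $k$. *)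

theory Defs
  imports "HOL-Analysis.Analysis"
begin

text \<open>A complex Hilbert space is modelled as a real Hilbert space (type class
  real_inner + complete_space) equipped with a complex structure J: a real-linear
  isometry with J (J x) = - x.  Multiplication by i is J; the complex inner product is
  inner x y + i * inner x (J y) (up to convention), whose norm is the given norm.\<close>

definition complex_structure :: "('a::real_inner \<Rightarrow> 'a) \<Rightarrow> bool" where
  "complex_structure J \<longleftrightarrow> linear J \<and> (\<forall>x. J (J x) = - x) \<and> (\<forall>x y. inner (J x) (J y) = inner x y)"

definition cscale :: "('a::real_vector \<Rightarrow> 'a) \<Rightarrow> complex \<Rightarrow> 'a \<Rightarrow> 'a" where
  "cscale J z x = Re z *\<^sub>R x + Im z *\<^sub>R J x"

definition complex_linear_op :: "('a::real_normed_vector \<Rightarrow> 'a) \<Rightarrow> ('a \<Rightarrow>\<^sub>L 'a) \<Rightarrow> bool" where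
  "complex_linear_op J D \<longleftrightarrow> (\<forall>x. D (J x) = J (D x))"

definition power_bounded :: "('a::real_normed_vector \<Rightarrow>\<^sub>L 'a) \<Rightarrow> bool" where
  "power_bounded D \<longleftrightarrow> (\<exists>C. \<forall>k x. norm ((blinfun_apply D ^^ k) x) \<le> C * norm x)"

text \<open>Resolvent R(z,D) x = (z I - D)^{-1} x (well defined for |z| > 1 when D is power bounded).\<close>
definition resolvent :: "('a::real_normed_vector \<Rightarrow> 'a) \<Rightarrow> complex \<Rightarrow> ('a \<Rightarrow>\<^sub>L 'a) \<Rightarrow> 'a \<Rightarrow> 'a" where
  "resolvent J z D x = (THE y. cscale J z y - D y = x)"

definition Lambda :: "real \<Rightarrow> real \<Rightarrow> real" where
  "Lambda \<delta> r = (if \<delta> = 1/2 then 1 / \<bar>ln (r - 1)\<bar> else (r - 1) powr (1 - 2 * \<delta>))"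

definition little_o :: "(nat \<Rightarrow> real) \<Rightarrow> (nat \<Rightarrow> real) \<Rightarrow> bool" where
  "little_o h g \<longleftrightarrow> (\<forall>\<epsilon>>0. eventually (\<lambda>k. h k \<le> \<epsilon> * g k) sequentially)"

definition resolvent_cond :: "('a::real_inner \<Rightarrow> 'a) \<Rightarrow> ('a \<Rightarrow>\<^sub>L 'a) \<Rightarrow> 'a \<Rightarrow> real \<Rightarrow> bool" where
  "resolvent_cond J D x \<delta> \<longleftrightarrow>
     ((\<lambda>r. Lambda \<delta> r * integral {0..2*pi}
          (\<lambda>\<theta>. (norm (resolvent J (complex_of_real r * cis \<theta>) D x))\<^sup>2)) \<longlongrightarrow> 0) (at_right 1)"

end

theory Submission imports Defs begin

(* Expanding the resolvent in its Neumann series R(z) x = sum_k z^(-k-1) D^k x, |z| > 1, and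
   applying Parseval's identity on the circle |z| = r gives
     integral_0^(2 pi) |R(r e^(i t)) x|^2 dt = 2 pi sum_k r^(-2k-2) |D^k x|^2,
   so both parts become statements about the sequence a_k = |D^k x| alone.
   (a) Split the series into a finite head, which Lambda(r) -> 0 kills, and a tail bounded by
   eps^2 sum_k r^(-k) k^(-2 delta); comparison with k^(1 - 2 delta) resp. log k shows that this
   sum is O(1/Lambda(r)) as r -> 1+.
   (b) Power boundedness gives a_n <= C a_k for k <= n, and at r = 1 + 1/n the first n weights
   r^(-2k-2) are at least 1/9, so n a_n^2 <= 9 C^2 sum_k r^(-2k-2) a_k^2 = o(1/Lambda(1 + 1/n)). *)

section \<open>Geometrically weighted sums of powers\<close>

lemma powr_increment_ge:
  assumes s: "0 < s" "s < 1" and N: "1 \<le> real N"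
  shows "(1 - s) * real (Suc N) powr (-s) \<le> real (Suc N) powr (1 - s) - real N powr (1 - s)"
proof -
  have "\<exists>z. real N < z \<and> z < real (Suc N) \<and>
      real (Suc N) powr (1 - s) - real N powr (1 - s) = (real (Suc N) - real N) * ((1 - s) * z powr (1 - s - 1))"
  proof (rule MVT2)
    fix x assume "real N \<le> x"
    then show "((\<lambda>x. x powr (1 - s)) has_real_derivative (1 - s) * x powr (1 - s - 1)) (at x)"
      using N by (intro has_real_derivative_powr) auto
  qed simp
  then obtain z where z: "real N < z" "z < real (Suc N)"
    and eq: "real (Suc N) powr (1 - s) - real N powr (1 - s) = (1 - s) * z powr (-s)"
    by auto
  have "real (Suc N) powr (-s) \<le> z powr (-s)"
    by (rule powr_mono2') (use z N s in auto)
  then show ?thesis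
    unfolding eq using s by simp
qed

lemma sum_powr_le:
  assumes s: "0 < s" "s < 1" and "1 \<le> N"
  shows "(\<Sum>k\<le>N. real k powr (-s)) \<le> real N powr (1 - s) / (1 - s)"
  using \<open>1 \<le> N\<close>
proof (induction N rule: nat_induct_at_least)
  case base
  show ?case using s by simp
next
  case (Suc N)
  have "(\<Sum>k\<le>Suc N. real k powr (-s)) \<le> real N powr (1 - s) / (1 - s) + real (Suc N) powr (-s)"
    using Suc.IH by simp
  also have "\<dots> = (real N powr (1 - s) + (1 - s) * real (Suc N) powr (-s)) / (1 - s)"
    using s by (simp add: add_divide_distrib)
  also have "\<dots> \<le> real (Suc N) powr (1 - s) / (1 - s)"
    using powr_increment_ge[OF s, of N] Suc.hyps s by (intro divide_right_mono) auto
  finally show ?case .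
qed

lemma sum_inverse_le_ln:
  assumes "1 \<le> N"
  shows "(\<Sum>k\<le>N. real k powr (-1)) \<le> 1 + ln (real N)"
  using assms
proof (induction N rule: nat_induct_at_least)
  case (Suc N)
  have N: "0 < real N" using Suc.hyps by simp
  have "ln (real N / real (Suc N)) \<le> real N / real (Suc N) - 1"
    by (rule ln_le_minus_one) (use N in simp)
  then have "real (Suc N) powr (-1) \<le> ln (real (Suc N)) - ln (real N)"
    using N by (simp add: ln_div powr_minus field_simps)
  then show ?case using Suc.IH by simp
qed simp

lemma summable_geometric_powr:
  assumes "0 \<le> s" "1 < r"
  shows "summable (\<lambda>k. inverse r ^ k * real k powr (-s))"
proof (rule summable_comparison_test'[where N = 0])
  show "summable (\<lambda>k. inverse r ^ k)"
    by (rule summable_geometric) (use assms in \<open>auto simp: inverse_less_1_iff\<close>)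
  fix k :: nat
  have "real k powr (-s) \<le> 1"
  proof (cases "k = 0")
    case False
    then have "1 \<le> real k powr s" using assms by (intro ge_one_powr_ge_zero) auto
    then show ?thesis by (simp add: powr_minus inverse_le_1_iff)
  qed simp
  then show "norm (inverse r ^ k * real k powr (-s)) \<le> inverse r ^ k"
    using assms by (simp add: abs_mult mult_left_le)
qed

text \<open>Cut the series at \<open>N = \<lfloor>1/(r-1)\<rfloor>\<close>: below \<open>N\<close> drop the geometric factor, above \<open>N\<close>
  bound \<open>k\<^sup>-\<^sup>s\<close> by \<open>N\<^sup>-\<^sup>s\<close> and sum the geometric series.\<close>
lemma geometric_powr_sum_le:
  assumes s: "0 < s" and r: "1 < r" "r \<le> 4/3"
  obtains N where "real N \<le> 1 / (r - 1)" "2 / (3 * (r - 1)) \<le> real N" "1 \<le> N"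
    "(\<Sum>k. inverse r ^ k * real k powr (-s)) \<le> (\<Sum>k\<le>N. real k powr (-s)) + real N powr (-s) * (r / (r - 1))"
proof -
  define t where "t = r - 1"
  have t: "0 < t" "t \<le> 1/3" unfolding t_def using r by auto
  define N where "N = nat \<lfloor>1 / t\<rfloor>"
  have N_eq: "real N = of_int \<lfloor>1 / t\<rfloor>"
    unfolding N_def using t by simp
  have N_le: "real N \<le> 1 / t" and N_gt: "1 / t - 1 < real N"
    unfolding N_eq by linarith+
  have "3 \<le> 1 / t" using t by (simp add: field_simps)
  then have N_ge: "2 / (3 * t) \<le> real N"
    using N_gt by (simp add: field_simps)
  then have N_pos: "1 \<le> N"
    using t \<open>3 \<le> 1 / t\<close> N_gt by linarith
  have q: "0 < inverse r" "inverse r < 1" using r by (auto simp: inverse_less_1_iff)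
  define head where "head k = (if k \<le> N then real k powr (-s) else 0)" for k
  define tail where "tail k = real N powr (-s) * inverse r ^ k" for k
  have head: "head sums (\<Sum>k\<le>N. real k powr (-s))"
    using sums_finite[of "{..N}" head] by (simp add: head_def)
  have "1 / (1 - inverse r) = r / (r - 1)"
    using r by (simp add: field_simps)
  then have tail: "tail sums (real N powr (-s) * (r / (r - 1)))"
    unfolding tail_def using sums_mult[OF geometric_sums[of "inverse r"]] q by fastforce
  have term_le: "inverse r ^ k * real k powr (-s) \<le> head k + tail k" for k
  proof (cases "k \<le> N")
    case True
    have "inverse r ^ k * real k powr (-s) \<le> real k powr (-s)"
      using q by (simp add: mult_left_le_one_le power_le_one)
    moreover have "0 \<le> tail k" using q by (simp add: tail_def)
    ultimately show ?thesis using True by (simp add: head_def)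
  next
    case False
    have "real k powr (-s) \<le> real N powr (-s)"
      by (rule powr_mono2') (use False s N_pos in auto)
    then show ?thesis
      using False q by (simp add: head_def tail_def mult.commute mult_left_mono)
  qed
  have "(\<Sum>k. inverse r ^ k * real k powr (-s)) \<le> (\<Sum>k. head k + tail k)"
    using s r by (intro suminf_le term_le summable_geometric_powr summable_add
        sums_summable[OF head] sums_summable[OF tail]) auto
  also have "\<dots> = (\<Sum>k\<le>N. real k powr (-s)) + real N powr (-s) * (r / (r - 1))"
    using sums_unique[OF sums_add[OF head tail]] by simp
  finally show ?thesis
    using that N_le N_ge N_pos unfolding t_def by blast
qed

lemma geometric_powr_sum_bound:
  assumes s: "0 < s" "s < 1" and r: "1 < r" "r \<le> 4/3"
  shows "(r - 1) powr (1 - s) * (\<Sum>k. inverse r ^ k * real k powr (-s)) \<le> 1 / (1 - s) + 2"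
proof -
  obtain N where N_le: "real N \<le> 1 / (r - 1)" and N_ge: "2 / (3 * (r - 1)) \<le> real N"
    and N_pos: "1 \<le> N"
    and split: "(\<Sum>k. inverse r ^ k * real k powr (-s))
        \<le> (\<Sum>k\<le>N. real k powr (-s)) + real N powr (-s) * (r / (r - 1))"
    using geometric_powr_sum_le[OF s(1) r] .
  define t where "t = r - 1"
  have t: "0 < t" unfolding t_def using r by simp
  have head: "t powr (1 - s) * (\<Sum>k\<le>N. real k powr (-s)) \<le> 1 / (1 - s)"
  proof -
    have "(\<Sum>k\<le>N. real k powr (-s)) \<le> real N powr (1 - s) / (1 - s)"
      by (rule sum_powr_le[OF s N_pos])
    also have "\<dots> \<le> (1 / t) powr (1 - s) / (1 - s)"
      using s N_le by (intro divide_right_mono powr_mono2) (auto simp: t_def)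
    finally have "t powr (1 - s) * (\<Sum>k\<le>N. real k powr (-s)) \<le> t powr (1 - s) * ((1 / t) powr (1 - s) / (1 - s))"
      by (rule mult_left_mono) simp
    also have "\<dots> = 1 / (1 - s)"
      using t by (simp add: powr_mult[symmetric])
    finally show ?thesis .
  qed
  have tail: "t powr (1 - s) * (real N powr (-s) * (r / t)) \<le> 2"
  proof -
    have "(2 / 3) * (1 / t) \<le> real N" using N_ge unfolding t_def by simp
    then have "((2 / 3) * (1 / t)) powr s \<le> real N powr s"
      using s t by (intro powr_mono2) auto
    moreover have "(2 / 3) * (1 / t) powr s \<le> ((2 / 3) * (1 / t)) powr s"
    proof -
      have "(2 / 3) * (1 / t) powr s \<le> (2 / 3) powr s * (1 / t) powr s"
        using powr_mono'[of s 1 "2/3::real"] s by (intro mult_right_mono) auto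
      then show ?thesis by (simp only: powr_mult)
    qed
    ultimately have "(2 / 3) * (1 / t) powr s \<le> real N powr s" by linarith
    then have "real N powr (-s) \<le> (3 / 2) * t powr s"
      using t N_pos by (simp add: powr_minus powr_divide field_simps)
    then have "t powr (1 - s) * (real N powr (-s) * (r / t)) \<le> t powr (1 - s) * ((3 / 2) * t powr s * (r / t))"
      using r t by (intro mult_left_mono mult_right_mono) auto
    also have "\<dots> = (3 / 2) * r"
      using t by (simp add: powr_diff field_simps)
    also have "\<dots> \<le> 2" using r by simp
    finally show ?thesis .
  qed
  have "t powr (1 - s) * (\<Sum>k. inverse r ^ k * real k powr (-s))
      \<le> t powr (1 - s) * (\<Sum>k\<le>N. real k powr (-s)) + t powr (1 - s) * (real N powr (-s) * (r / t))"
    using mult_left_mono[OF split, of "t powr (1 - s)"] unfolding t_def by (simp add: distrib_left)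
  then show ?thesis
    using head tail unfolding t_def by linarith
qed

lemma geometric_inverse_sum_bound:
  assumes r: "1 < r" "r \<le> 4/3"
  shows "(\<Sum>k. inverse r ^ k * real k powr (-1)) / ln (1 / (r - 1)) \<le> 4"
proof -
  obtain N where N_le: "real N \<le> 1 / (r - 1)" and N_ge: "2 / (3 * (r - 1)) \<le> real N"
    and N_pos: "1 \<le> N"
    and split: "(\<Sum>k. inverse r ^ k * real k powr (-1))
        \<le> (\<Sum>k\<le>N. real k powr (-1)) + real N powr (-1) * (r / (r - 1))"
    using geometric_powr_sum_le[of 1 r] r by auto
  define L where "L = ln (1 / (r - 1))"
  have L: "1 \<le> L"
  proof -
    have "exp 1 \<le> (3::real)" using exp_le by simp
    also have "3 \<le> 1 / (r - 1)" using r by (simp add: field_simps)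
    finally show ?thesis using r unfolding L_def by (simp add: ln_ge_iff)
  qed
  have "ln (real N) \<le> L"
    unfolding L_def using N_le N_pos r by (subst ln_le_cancel_iff) auto
  then have "(\<Sum>k\<le>N. real k powr (-1)) \<le> 1 + L"
    using sum_inverse_le_ln[OF N_pos] by linarith
  moreover have "real N powr (-1) * (r / (r - 1)) \<le> 2"
  proof -
    have "2 / 3 \<le> real N * (r - 1)" using N_ge r by (simp add: field_simps)
    then show ?thesis using r N_pos by (simp add: powr_minus field_simps)
  qed
  ultimately have "(\<Sum>k. inverse r ^ k * real k powr (-1)) \<le> L + 3"
    using split by linarith
  then show ?thesis
    using L unfolding L_def[symmetric] by (simp add: field_simps)
qed

section \<open>The normalising weight \<open>Lambda\<close>\<close>

lemma Lambda_half: "Lambda (1/2) r = 1 / \<bar>ln (r - 1)\<bar>"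
  by (simp add: Lambda_def)

lemma Lambda_nonneg: "0 \<le> Lambda \<delta> r"
  unfolding Lambda_def by auto

lemma Lambda_not_half: "\<delta> \<noteq> 1/2 \<Longrightarrow> Lambda \<delta> r = (r - 1) powr (1 - 2 * \<delta>)"
  by (simp add: Lambda_def)

lemma Lambda_tendsto_0:
  assumes "0 < \<delta>" "\<delta> \<le> 1/2"
  shows "(Lambda \<delta> \<longlongrightarrow> 0) (at_right 1)"
proof -
  have "((\<lambda>r::real. r - 1) \<longlongrightarrow> 1 - 1) (at_right 1)"
    by (intro tendsto_intros)
  then have shift: "((\<lambda>r::real. r - 1) \<longlongrightarrow> 0) (at_right 1)"
    by simp
  have shift_pos: "\<forall>\<^sub>F r in at_right 1. 0 < r - (1::real)"
    by (simp add: eventually_at_right_less)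
  show ?thesis
  proof (cases "\<delta> = 1/2")
    case True
    have "filterlim (\<lambda>r. r - 1) (at_right 0) (at_right (1::real))"
      by (rule tendsto_imp_filterlim_at_right[OF shift shift_pos])
    then have "filterlim (\<lambda>r. ln (r - 1)) at_bot (at_right (1::real))"
      by (rule filterlim_compose[OF ln_at_0])
    then have "filterlim (\<lambda>r. - ln (r - 1)) at_top (at_right (1::real))"
      by (rule filterlim_compose[OF filterlim_uminus_at_top_at_bot])
    then have lim: "((\<lambda>r. inverse (- ln (r - 1))) \<longlongrightarrow> 0) (at_right (1::real))"
      by (rule tendsto_inverse_0_at_top)
    have "\<forall>\<^sub>F r in at_right 1. r \<in> {1<..<2::real}"
      by (rule eventually_at_right_real) simp
    then have ev: "\<forall>\<^sub>F r in at_right 1. inverse (- ln (r - 1)) = 1 / \<bar>ln (r - 1 :: real)\<bar>"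
    proof eventually_elim
      case (elim r)
      then have "ln (r - 1) < 0" by simp
      then show ?case by (simp add: abs_if divide_inverse)
    qed
    show ?thesis
      using Lim_transform_eventually[OF lim ev]
      unfolding True Lambda_half[abs_def] .
  next
    case False
    have "((\<lambda>r. (r - 1) powr (1 - 2 * \<delta>)) \<longlongrightarrow> 0) (at_right (1::real))"
    proof (rule tendsto_zero_powrI[OF shift])
      show "\<forall>\<^sub>F r in at_right 1. 0 \<le> r - (1::real)"
        using shift_pos by eventually_elim simp
      show "0 < 1 - 2 * \<delta>" using assms False by simp
    qed simp
    moreover have "Lambda \<delta> = (\<lambda>r. (r - 1) powr (1 - 2 * \<delta>))"
      using Lambda_not_half[OF False] by (intro ext)
    ultimately show ?thesis by simp
  qed
qed


section \<open>Weighted square sums of a sequence\<close>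

definition weighted_sq_sum :: "(nat \<Rightarrow> real) \<Rightarrow> real \<Rightarrow> real" where
  "weighted_sq_sum a r = (\<Sum>k. inverse r ^ (2 * k + 2) * (a k)\<^sup>2)"

lemma summable_weighted_sq:
  fixes a :: "nat \<Rightarrow> real"
  assumes r: "1 < r" and bound: "\<And>k. \<bar>a k\<bar> \<le> B"
  shows "summable (\<lambda>k. inverse r ^ (2 * k + 2) * (a k)\<^sup>2)"
proof -
  have q: "0 \<le> inverse r" "inverse r < 1" using r by (auto simp: inverse_less_1_iff)
  have geometric: "summable (\<lambda>k. B\<^sup>2 * inverse r ^ k)"
    using q by (intro summable_mult summable_geometric) auto
  have "norm (inverse r ^ (2 * k + 2) * (a k)\<^sup>2) \<le> B\<^sup>2 * inverse r ^ k" for k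
  proof -
    have "inverse r ^ (2 * k + 2) \<le> inverse r ^ k"
      using q by (intro power_decreasing) auto
    moreover have "(a k)\<^sup>2 \<le> B\<^sup>2"
      using power_mono[OF bound[of k] abs_ge_zero, of 2] by simp
    ultimately have "inverse r ^ (2 * k + 2) * (a k)\<^sup>2 \<le> inverse r ^ k * B\<^sup>2"
      by (intro mult_mono) (use q in auto)
    then show ?thesis
      using q by (simp add: abs_mult mult.commute)
  qed
  then show ?thesis
    by (rule summable_comparison_test'[OF geometric])
qed

lemma weighted_sq_sum_nonneg:
  fixes a :: "nat \<Rightarrow> real"
  assumes "1 < r" "\<And>k. \<bar>a k\<bar> \<le> B"
  shows "0 \<le> weighted_sq_sum a r"
  unfolding weighted_sq_sum_def using assms
  by (intro suminf_nonneg summable_weighted_sq) auto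

lemma weighted_sq_sum_le:
  fixes a :: "nat \<Rightarrow> real"
  assumes r: "1 < r" and bound: "\<And>k. \<bar>a k\<bar> \<le> B" and s: "0 \<le> s" and "0 \<le> \<eta>"
    and small: "\<And>k. N \<le> k \<Longrightarrow> (a k)\<^sup>2 \<le> \<eta> * real k powr (-s)"
  shows "weighted_sq_sum a r \<le> (\<Sum>k<N. (a k)\<^sup>2) + \<eta> * (\<Sum>k. inverse r ^ k * real k powr (-s))"
proof -
  have q: "0 \<le> inverse r" "inverse r \<le> 1" using r by (auto simp: inverse_le_1_iff)
  define head where "head k = (if k < N then (a k)\<^sup>2 else 0)" for k
  define tail where "tail k = \<eta> * (inverse r ^ k * real k powr (-s))" for k
  have head: "head sums (\<Sum>k<N. (a k)\<^sup>2)"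
    using sums_finite[of "{..<N}" head] by (simp add: head_def)
  have tail: "tail sums (\<eta> * (\<Sum>k. inverse r ^ k * real k powr (-s)))"
    unfolding tail_def using s r by (intro sums_mult summable_sums summable_geometric_powr)
  have term_le: "inverse r ^ (2 * k + 2) * (a k)\<^sup>2 \<le> head k + tail k" for k
  proof (cases "k < N")
    case True
    have "inverse r ^ (2 * k + 2) * (a k)\<^sup>2 \<le> (a k)\<^sup>2"
      by (intro mult_left_le_one_le power_le_one) (use q in auto)
    moreover have "0 \<le> tail k" using q \<open>0 \<le> \<eta>\<close> by (simp add: tail_def)
    ultimately show ?thesis using True by (simp add: head_def)
  next
    case False
    have "inverse r ^ (2 * k + 2) \<le> inverse r ^ k"
      using q by (intro power_decreasing) auto
    then have "inverse r ^ (2 * k + 2) * (a k)\<^sup>2 \<le> inverse r ^ k * (\<eta> * real k powr (-s))"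
      using small[of k] False q by (intro mult_mono) auto
    then show ?thesis using False by (simp add: head_def tail_def mult_ac)
  qed
  have "weighted_sq_sum a r \<le> (\<Sum>k. head k + tail k)"
    unfolding weighted_sq_sum_def
    by (intro suminf_le term_le summable_weighted_sq[OF r bound] summable_add
        sums_summable[OF head] sums_summable[OF tail])
  also have "\<dots> = (\<Sum>k<N. (a k)\<^sup>2) + \<eta> * (\<Sum>k. inverse r ^ k * real k powr (-s))"
    using sums_unique[OF sums_add[OF head tail]] by simp
  finally show ?thesis .
qed

lemma Lambda_geometric_powr_sum_bounded:
  assumes "0 < \<delta>" "\<delta> \<le> 1/2"
  obtains K where "\<And>r. 1 < r \<Longrightarrow> r \<le> 4/3 \<Longrightarrow>
    Lambda \<delta> r * (\<Sum>k. inverse r ^ k * real k powr (- (2 * \<delta>))) \<le> K"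
proof (cases "\<delta> = 1/2")
  case True
  have "Lambda (1/2) r * (\<Sum>k. inverse r ^ k * real k powr (- (2 * (1/2)))) \<le> 4"
    if "1 < r" "r \<le> 4/3" for r
  proof -
    have "\<bar>ln (r - 1)\<bar> = ln (1 / (r - 1))"
      using that by (simp add: ln_div)
    then show ?thesis
      using geometric_inverse_sum_bound[OF that] unfolding Lambda_half by simp
  qed
  then show ?thesis using that True by blast
next
  case False
  then have "Lambda \<delta> r * (\<Sum>k. inverse r ^ k * real k powr (- (2 * \<delta>))) \<le> 1 / (1 - 2 * \<delta>) + 2"
    if "1 < r" "r \<le> 4/3" for r
    using geometric_powr_sum_bound[of "2 * \<delta>" r] assms that by (simp add: Lambda_not_half)
  then show ?thesis using that by blast
qed

lemma eventually_sq_le_of_little_o_powr: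
  assumes "little_o a (\<lambda>k. real k powr (-\<delta>))" "\<And>k. 0 \<le> a k" "0 < \<eta>"
  shows "\<forall>\<^sub>F k in sequentially. (a k)\<^sup>2 \<le> \<eta> * real k powr (- (2 * \<delta>))"
proof -
  have "\<forall>\<^sub>F k in sequentially. a k \<le> sqrt \<eta> * real k powr (-\<delta>)"
    using assms(1,3) unfolding little_o_def by simp
  then show ?thesis
  proof eventually_elim
    case (elim k)
    have "(a k)\<^sup>2 \<le> (sqrt \<eta> * real k powr (-\<delta>))\<^sup>2"
      using elim assms(2)[of k] by (intro power_mono) auto
    also have "\<dots> = (sqrt \<eta>)\<^sup>2 * (real k powr (-\<delta>))\<^sup>2"
      by (rule power_mult_distrib)
    also have "\<dots> = \<eta> * real k powr (- (2 * \<delta>))"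
      using assms(3) by (simp add: power2_eq_square powr_add[symmetric])
    finally show ?case .
  qed
qed

lemma Lambda_weighted_sq_sum_tendsto_0:
  assumes \<delta>: "0 < \<delta>" "\<delta> \<le> 1/2" and nonneg: "\<And>k. 0 \<le> a k" and bound: "\<And>k. a k \<le> B"
    and small: "little_o a (\<lambda>k. real k powr (-\<delta>))"
  shows "((\<lambda>r. Lambda \<delta> r * weighted_sq_sum a r) \<longlongrightarrow> 0) (at_right 1)"
proof (rule order_tendstoI)
  fix e :: real
  have bound': "\<bar>a k\<bar> \<le> B" for k using nonneg[of k] bound[of k] by simp
  have nonneg': "0 \<le> Lambda \<delta> r * weighted_sq_sum a r" if "1 < r" for r
    using weighted_sq_sum_nonneg[OF that bound'] Lambda_nonneg by simp
  show "e < 0 \<Longrightarrow> \<forall>\<^sub>F r in at_right 1. e < Lambda \<delta> r * weighted_sq_sum a r"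
    using eventually_at_right_less[of "1::real"] by (auto elim!: eventually_mono dest: nonneg')
  assume "0 < e"
  obtain K where K: "\<And>r. 1 < r \<Longrightarrow> r \<le> 4/3 \<Longrightarrow>
      Lambda \<delta> r * (\<Sum>k. inverse r ^ k * real k powr (- (2 * \<delta>))) \<le> K"
    using Lambda_geometric_powr_sum_bounded[OF \<delta>] by blast
  define \<eta> where "\<eta> = e / (2 * (\<bar>K\<bar> + 1))"
  have \<eta>_pos: "0 < \<eta>"
    unfolding \<eta>_def using \<open>0 < e\<close> by (intro divide_pos_pos) auto
  have "\<eta> * K \<le> \<eta> * \<bar>K\<bar>"
    using \<eta>_pos by (intro mult_left_mono) auto
  also have "\<dots> < \<eta> * (2 * (\<bar>K\<bar> + 1)) / 2"
    using \<eta>_pos by simp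
  finally have \<eta>_K: "\<eta> * K < e / 2"
    unfolding \<eta>_def by simp
  obtain N where tail: "\<And>k. N \<le> k \<Longrightarrow> (a k)\<^sup>2 \<le> \<eta> * real k powr (- (2 * \<delta>))"
    using eventually_sq_le_of_little_o_powr[OF small nonneg \<eta>_pos]
    unfolding eventually_sequentially by blast
  define A where "A = (\<Sum>k<N. (a k)\<^sup>2)"
  have "((\<lambda>r. Lambda \<delta> r * A) \<longlongrightarrow> 0 * A) (at_right 1)"
    by (intro tendsto_mult Lambda_tendsto_0 \<delta> tendsto_const)
  then have "\<forall>\<^sub>F r in at_right 1. Lambda \<delta> r * A < e / 2"
    using \<open>0 < e\<close> by (intro order_tendstoD(2)) auto
  moreover have "\<forall>\<^sub>F r in at_right 1. r \<in> {1<..<4/3::real}"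
    by (rule eventually_at_right_real) simp
  ultimately show "\<forall>\<^sub>F r in at_right 1. Lambda \<delta> r * weighted_sq_sum a r < e"
  proof eventually_elim
    case (elim r)
    then have r: "1 < r" "r \<le> 4/3" by auto
    have "Lambda \<delta> r * weighted_sq_sum a r
        \<le> Lambda \<delta> r * (A + \<eta> * (\<Sum>k. inverse r ^ k * real k powr (- (2 * \<delta>))))"
      unfolding A_def using \<delta> \<eta>_pos tail
      by (intro mult_left_mono Lambda_nonneg weighted_sq_sum_le[OF r(1) bound']) auto
    also have "\<dots> = Lambda \<delta> r * A + \<eta> * (Lambda \<delta> r * (\<Sum>k. inverse r ^ k * real k powr (- (2 * \<delta>))))"
      by (simp add: algebra_simps)
    also have "\<dots> \<le> Lambda \<delta> r * A + \<eta> * K"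
      using K[OF r] \<eta>_pos by (intro add_left_mono mult_left_mono) auto
    finally show ?case using elim(1) \<eta>_K by linarith
  qed
qed

text \<open>At \<open>r = 1 + 1/n\<close> the weights \<open>r\<^sup>-\<^sup>2\<^sup>k\<^sup>-\<^sup>2\<close>, \<open>k < n\<close>, are at least \<open>r\<^sup>-\<^sup>2\<^sup>n \<ge> e\<^sup>-\<^sup>2 > 1/9\<close>.\<close>
lemma sq_le_weighted_sq_sum:
  assumes nonneg: "\<And>k. 0 \<le> a k" and decr: "\<And>k n. k \<le> n \<Longrightarrow> a n \<le> C * a k" and "1 \<le> n"
  shows "(a n)\<^sup>2 \<le> 9 * C\<^sup>2 * weighted_sq_sum a (1 + 1 / real n) / real n"
proof -
  define r where "r = 1 + 1 / real n"
  have r: "1 < r" unfolding r_def using \<open>1 \<le> n\<close> by simp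
  have q: "0 \<le> inverse r" "inverse r \<le> 1" using r by (auto simp: inverse_le_1_iff)
  have bound: "\<bar>a k\<bar> \<le> C * a 0" for k using decr[of 0 k] nonneg[of k] by simp
  have "r ^ n \<le> exp (1 / real n) ^ n"
    unfolding r_def using exp_ge_add_one_self[of "1 / real n"] by (intro power_mono) auto
  also have "\<dots> = exp 1" using \<open>1 \<le> n\<close> by (simp add: exp_of_nat_mult[symmetric])
  also have "\<dots> \<le> 3" using exp_le by simp
  finally have "(r ^ n)\<^sup>2 \<le> 3\<^sup>2" using r by (intro power_mono) auto
  then have weight: "1 / 9 \<le> inverse r ^ (2 * n)"
    using r by (simp add: power_mult[symmetric] field_simps)
  have term_ge: "inverse r ^ (2 * n) * (a n)\<^sup>2 \<le> C\<^sup>2 * (inverse r ^ (2 * k + 2) * (a k)\<^sup>2)"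
    if "k < n" for k
  proof -
    have "inverse r ^ (2 * n) \<le> inverse r ^ (2 * k + 2)"
      using q that by (intro power_decreasing) auto
    moreover have "(a n)\<^sup>2 \<le> C\<^sup>2 * (a k)\<^sup>2"
      using power_mono[OF decr[of k n], of 2] nonneg[of n] that by (simp add: power_mult_distrib)
    ultimately have "inverse r ^ (2 * n) * (a n)\<^sup>2 \<le> inverse r ^ (2 * k + 2) * (C\<^sup>2 * (a k)\<^sup>2)"
      by (intro mult_mono) (use q in auto)
    then show ?thesis
      by (simp add: mult_ac)
  qed
  have "(1 / 9) * (a n)\<^sup>2 \<le> inverse r ^ (2 * n) * (a n)\<^sup>2"
    using weight by (intro mult_right_mono) auto
  then have "real n * ((1 / 9) * (a n)\<^sup>2) \<le> real n * (inverse r ^ (2 * n) * (a n)\<^sup>2)"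
    by (rule mult_left_mono) simp
  also have "\<dots> = (\<Sum>k<n. inverse r ^ (2 * n) * (a n)\<^sup>2)"
    by simp
  also have "\<dots> \<le> C\<^sup>2 * (\<Sum>k<n. inverse r ^ (2 * k + 2) * (a k)\<^sup>2)"
    unfolding sum_distrib_left by (intro sum_mono term_ge) auto
  also have "\<dots> \<le> C\<^sup>2 * weighted_sq_sum a r"
    unfolding weighted_sq_sum_def
    using q by (intro mult_left_mono sum_le_suminf summable_weighted_sq[OF r bound]) auto
  finally show ?thesis
    unfolding r_def using \<open>1 \<le> n\<close> by (simp add: field_simps)
qed

lemma little_o_of_weighted_sq_sum:
  assumes nonneg: "\<And>k. 0 \<le> a k" and decr: "\<And>k n. k \<le> n \<Longrightarrow> a n \<le> C * a k" and "0 < C"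
    and lim: "((\<lambda>r. L r * weighted_sq_sum a r) \<longlongrightarrow> 0) (at_right 1)"
    and pos: "\<forall>\<^sub>F n in sequentially. 0 < L (1 + 1 / real n)"
  shows "little_o a (\<lambda>n. sqrt (1 / (real n * L (1 + 1 / real n))))"
  unfolding little_o_def
proof (intro allI impI)
  fix \<epsilon> :: real
  assume "0 < \<epsilon>"
  have "filterlim (\<lambda>n. 1 + 1 / real n) (at_right 1) sequentially"
  proof (rule tendsto_imp_filterlim_at_right)
    show "((\<lambda>n. 1 + 1 / real n) \<longlongrightarrow> 1) sequentially"
      using tendsto_add[OF tendsto_const lim_1_over_n, of "1::real"] by simp
    show "\<forall>\<^sub>F n in sequentially. 1 < 1 + 1 / real n"
      using eventually_gt_at_top[of 0] by eventually_elim simp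
  qed
  then have "((\<lambda>n. L (1 + 1 / real n) * weighted_sq_sum a (1 + 1 / real n)) \<longlongrightarrow> 0) sequentially"
    by (rule filterlim_compose[OF lim])
  then have "\<forall>\<^sub>F n in sequentially. L (1 + 1 / real n) * weighted_sq_sum a (1 + 1 / real n) < \<epsilon>\<^sup>2 / (9 * C\<^sup>2)"
    using \<open>0 < \<epsilon>\<close> \<open>0 < C\<close> by (intro order_tendstoD(2)) auto
  with pos eventually_ge_at_top[of "1::nat"]
  show "\<forall>\<^sub>F n in sequentially. a n \<le> \<epsilon> * sqrt (1 / (real n * L (1 + 1 / real n)))"
  proof eventually_elim
    case (elim n)
    define l where "l = L (1 + 1 / real n)"
    have l: "0 < l" and n: "1 \<le> n" and small: "l * weighted_sq_sum a (1 + 1 / real n) < \<epsilon>\<^sup>2 / (9 * C\<^sup>2)"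
      using elim unfolding l_def by auto
    have "(a n)\<^sup>2 \<le> 9 * C\<^sup>2 * (l * weighted_sq_sum a (1 + 1 / real n)) / (real n * l)"
      using sq_le_weighted_sq_sum[of a C n, OF nonneg decr n] l by simp
    also have "\<dots> \<le> 9 * C\<^sup>2 * (\<epsilon>\<^sup>2 / (9 * C\<^sup>2)) / (real n * l)"
      using l n small \<open>0 < C\<close> by (intro divide_right_mono mult_left_mono) auto
    also have "\<dots> = (\<epsilon> * sqrt (1 / (real n * l)))\<^sup>2"
      using l n \<open>0 < C\<close> by (simp add: power_mult_distrib)
    finally show ?case
      unfolding l_def by (rule power2_le_imp_le) (use \<open>0 < \<epsilon>\<close> l n in \<open>auto simp: l_def\<close>)
  qed
qed

lemma little_o_cong:
  assumes "little_o h g" "\<forall>\<^sub>F k in sequentially. g k = g' k"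
  shows "little_o h g'"
  unfolding little_o_def
proof (intro allI impI)
  fix \<epsilon> :: real
  assume "0 < \<epsilon>"
  with assms(1) have "\<forall>\<^sub>F k in sequentially. h k \<le> \<epsilon> * g k"
    unfolding little_o_def by blast
  with assms(2) show "\<forall>\<^sub>F k in sequentially. h k \<le> \<epsilon> * g' k"
    by eventually_elim simp
qed

corollary little_o_powr_of_Lambda_weighted_sq_sum:
  assumes "\<And>k. 0 \<le> a k" "\<And>k n. k \<le> n \<Longrightarrow> a n \<le> C * a k" "0 < C"
    and \<delta>: "0 < \<delta>" "\<delta> < 1/2"
    and "((\<lambda>r. Lambda \<delta> r * weighted_sq_sum a r) \<longlongrightarrow> 0) (at_right 1)"
  shows "little_o a (\<lambda>n. real n powr (-\<delta>))"
proof (rule little_o_cong[OF little_o_of_weighted_sq_sum[OF assms(1-3,6)]])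
  have L: "Lambda \<delta> (1 + 1 / real n) = real n powr (2 * \<delta> - 1)" if "0 < n" for n
    using \<delta> that by (simp add: Lambda_not_half powr_divide powr_minus_divide[symmetric])
  show "\<forall>\<^sub>F n in sequentially. 0 < Lambda \<delta> (1 + 1 / real n)"
    using eventually_gt_at_top[of 0] by eventually_elim (simp add: L)
  show "\<forall>\<^sub>F n in sequentially. sqrt (1 / (real n * Lambda \<delta> (1 + 1 / real n))) = real n powr (-\<delta>)"
    using eventually_gt_at_top[of 0]
  proof eventually_elim
    case (elim n)
    have "real n * Lambda \<delta> (1 + 1 / real n) = real n powr 1 * real n powr (2 * \<delta> - 1)"
      using elim by (simp add: L)
    also have "\<dots> = real n powr (1 + (2 * \<delta> - 1))"
      by (rule powr_add[symmetric])
    also have "\<dots> = (real n powr \<delta>)\<^sup>2"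
      by (simp add: power2_eq_square powr_add[symmetric])
    finally show ?case
      using elim by (simp add: powr_minus real_sqrt_divide inverse_eq_divide)
  qed
qed

corollary little_o_sqrt_ln_of_Lambda_weighted_sq_sum:
  assumes "\<And>k. 0 \<le> a k" "\<And>k n. k \<le> n \<Longrightarrow> a n \<le> C * a k" "0 < C"
    and "((\<lambda>r. Lambda (1/2) r * weighted_sq_sum a r) \<longlongrightarrow> 0) (at_right 1)"
  shows "little_o a (\<lambda>n. sqrt (ln (real n) / real n))"
proof (rule little_o_cong[OF little_o_of_weighted_sq_sum[OF assms]])
  have L: "Lambda (1/2) (1 + 1 / real n) = 1 / ln (real n)" if "2 \<le> n" for n
    using that by (simp add: Lambda_half ln_div)
  show "\<forall>\<^sub>F n in sequentially. 0 < Lambda (1/2) (1 + 1 / real n)"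
    using eventually_ge_at_top[of 2] by eventually_elim (simp add: L)
  show "\<forall>\<^sub>F n in sequentially. sqrt (1 / (real n * Lambda (1/2) (1 + 1 / real n))) = sqrt (ln (real n) / real n)"
    using eventually_ge_at_top[of 2] by eventually_elim (simp add: L)
qed

section \<open>Series in complete normed spaces\<close>

text \<open>The library states these facts for class \<open>banach\<close>; the sort \<open>{real_inner, complete_space}\<close> of
  the theorem is not a subsort of it.\<close>

lemma summable_norm_cancel_complete:
  fixes f :: "nat \<Rightarrow> 'a::{real_normed_vector, complete_space}"
  assumes "summable (\<lambda>n. norm (f n))"
  shows "summable f"
proof -
  define S where "S = (\<lambda>n. \<Sum>k<n. f k)"
  define T where "T = (\<lambda>n. \<Sum>k<n. norm (f k))"
  have dist_le: "dist (S m) (S n) \<le> dist (T m) (T n)" if "m \<le> n" for m n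
  proof -
    have "S n - S m = sum f {m..<n}" "T n - T m = (\<Sum>k=m..<n. norm (f k))"
      using that unfolding S_def T_def by (simp_all add: sum_diff_nat_ivl[of 0, symmetric] atLeast0LessThan)
    moreover have "norm (sum f {m..<n}) \<le> (\<Sum>k=m..<n. norm (f k))"
      by (rule norm_sum)
    ultimately show ?thesis
      by (simp add: dist_norm norm_minus_commute[of "S m"] dist_real_def abs_minus_commute[of "T m"])
  qed
  have "Cauchy T"
    using assms by (simp add: T_def summable_iff_convergent Cauchy_convergent_iff)
  moreover have "dist (S m) (S n) \<le> dist (T m) (T n)" for m n
    using dist_le[of m n] dist_le[of n m] by (cases "m \<le> n") (auto simp: dist_commute)
  ultimately have "Cauchy S"
    unfolding Cauchy_def by (meson le_less_trans)
  then show ?thesis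
    by (simp add: S_def summable_iff_convergent Cauchy_convergent_iff)
qed

lemma norm_suminf_le_complete:
  fixes f :: "nat \<Rightarrow> 'a::{real_normed_vector, complete_space}"
  assumes "summable g" "\<And>n. norm (f n) \<le> g n"
  shows "norm (suminf f) \<le> suminf g"
proof -
  have norms: "summable (\<lambda>n. norm (f n))"
    using summable_comparison_test'[of g 0 "\<lambda>n. norm (f n)"] assms by simp
  have "norm (suminf f) \<le> (\<Sum>n. norm (f n))"
  proof (rule LIMSEQ_le)
    show "(\<lambda>n. norm (\<Sum>k<n. f k)) \<longlonglongrightarrow> norm (suminf f)"
      by (intro tendsto_norm summable_LIMSEQ summable_norm_cancel_complete[OF norms])
    show "(\<lambda>n. \<Sum>k<n. norm (f k)) \<longlonglongrightarrow> (\<Sum>n. norm (f n))"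
      by (rule summable_LIMSEQ[OF norms])
    show "\<exists>N. \<forall>n\<ge>N. norm (\<Sum>k<n. f k) \<le> (\<Sum>k<n. norm (f k))"
      by (rule exI[of _ 0]) (simp add: norm_sum)
  qed
  also have "\<dots> \<le> suminf g"
    by (rule suminf_le[OF assms(2) norms assms(1)])
  finally show ?thesis .
qed

lemma abs_norm_sq_diff_le:
  fixes a b :: "'a::real_normed_vector"
  assumes "norm a \<le> M" "norm b \<le> M"
  shows "\<bar>(norm a)\<^sup>2 - (norm b)\<^sup>2\<bar> \<le> 2 * M * norm (a - b)"
proof -
  have "(norm a)\<^sup>2 - (norm b)\<^sup>2 = (norm a - norm b) * (norm a + norm b)"
    by (simp add: power2_eq_square algebra_simps)
  then have "\<bar>(norm a)\<^sup>2 - (norm b)\<^sup>2\<bar> = \<bar>norm a - norm b\<bar> * (norm a + norm b)"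
    by (simp add: abs_mult)
  also have "\<dots> \<le> norm (a - b) * (2 * M)"
    using assms by (intro mult_mono norm_triangle_ineq3) auto
  finally show ?thesis by (simp add: mult_ac)
qed

lemma uniform_limit_norm_sq_partial_sums:
  fixes f :: "nat \<Rightarrow> 'b \<Rightarrow> 'a::{real_normed_vector, complete_space}"
  assumes summable: "summable b" and bound: "\<And>k t. norm (f k t) \<le> b k"
  shows "uniform_limit S (\<lambda>N t. (norm (\<Sum>k<N. f k t))\<^sup>2) (\<lambda>t. (norm (\<Sum>k. f k t))\<^sup>2) sequentially"
proof (rule uniform_limitI)
  fix e :: real
  assume "0 < e"
  define M where "M = (\<Sum>k. b k)"
  define \<rho> where "\<rho> N = M - (\<Sum>k<N. b k)" for N
  have b_nonneg: "0 \<le> b k" for k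
    using bound[of k] norm_ge_zero order_trans by blast
  have summable_f: "summable (\<lambda>k. f k t)" for t
    by (rule summable_norm_cancel_complete, rule summable_comparison_test'[OF summable]) (use bound in auto)
  have M_nonneg: "0 \<le> M"
    unfolding M_def using b_nonneg by (intro suminf_nonneg summable)
  have bound_suminf: "norm (\<Sum>k. f k t) \<le> M" for t
    unfolding M_def by (rule norm_suminf_le_complete[OF summable bound])
  have bound_sum: "norm (\<Sum>k<N. f k t) \<le> M" for N t
  proof -
    have "norm (\<Sum>k<N. f k t) \<le> (\<Sum>k<N. b k)"
      using norm_sum[of "\<lambda>k. f k t" "{..<N}"] sum_mono[of "{..<N}" "\<lambda>k. norm (f k t)" b] bound
      by (meson order_trans)
    also have "\<dots> \<le> M"
      unfolding M_def using b_nonneg by (intro sum_le_suminf summable) auto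
    finally show ?thesis .
  qed
  have tail: "norm ((\<Sum>k. f k t) - (\<Sum>k<N. f k t)) \<le> \<rho> N" for N t
  proof -
    have "(\<Sum>k. f k t) - (\<Sum>k<N. f k t) = (\<Sum>k. f (k + N) t)"
      using suminf_split_initial_segment[OF summable_f, of t N] by simp
    also have "norm \<dots> \<le> (\<Sum>k. b (k + N))"
      by (rule norm_suminf_le_complete[OF summable_ignore_initial_segment[OF summable] bound])
    also have "\<dots> = \<rho> N"
      using suminf_split_initial_segment[OF summable, of N] by (simp add: \<rho>_def M_def)
    finally show ?thesis .
  qed
  have "\<rho> \<longlonglongrightarrow> M - M"
    unfolding \<rho>_def[abs_def] M_def by (intro tendsto_diff tendsto_const summable_LIMSEQ summable)
  then have "(\<lambda>N. 2 * M * \<rho> N) \<longlonglongrightarrow> 0"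
    using tendsto_mult_left[of \<rho> 0 sequentially "2 * M"] by simp
  then have "\<forall>\<^sub>F N in sequentially. 2 * M * \<rho> N < e"
    using \<open>0 < e\<close> by (rule order_tendstoD(2))
  then show "\<forall>\<^sub>F N in sequentially. \<forall>t\<in>S. dist ((norm (\<Sum>k<N. f k t))\<^sup>2) ((norm (\<Sum>k. f k t))\<^sup>2) < e"
  proof eventually_elim
    case (elim N)
    show ?case
    proof
      fix t
      have "\<bar>(norm (\<Sum>k. f k t))\<^sup>2 - (norm (\<Sum>k<N. f k t))\<^sup>2\<bar>
          \<le> 2 * M * norm ((\<Sum>k. f k t) - (\<Sum>k<N. f k t))"
        by (rule abs_norm_sq_diff_le[OF bound_suminf bound_sum])
      also have "\<dots> \<le> 2 * M * \<rho> N"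
        using M_nonneg by (intro mult_left_mono tail) auto
      finally have "\<bar>(norm (\<Sum>k. f k t))\<^sup>2 - (norm (\<Sum>k<N. f k t))\<^sup>2\<bar> < e"
        using elim by linarith
      then show "dist ((norm (\<Sum>k<N. f k t))\<^sup>2) ((norm (\<Sum>k. f k t))\<^sup>2) < e"
        by (simp add: dist_real_def abs_minus_commute)
    qed
  qed
qed

section \<open>Parseval's identity on the circle\<close>

lemma has_integral_cos_int:
  fixes m :: int
  shows "((\<lambda>t. cos (of_int m * t)) has_integral (if m = 0 then 2 * pi else 0)) {0..2*pi}"
proof (cases "m = 0")
  case False
  have "((\<lambda>t. cos (of_int m * t)) has_integral (sin (of_int m * (2 * pi)) / of_int m - sin (of_int m * 0) / of_int m)) {0..2*pi}"
  proof (rule fundamental_theorem_of_calculus)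
    fix t :: real
    have "((\<lambda>t. sin (of_int m * t) / of_int m) has_real_derivative cos (of_int m * t)) (at t)"
      by (rule derivative_eq_intros refl | use False in simp)+
    then show "((\<lambda>t. sin (of_int m * t) / of_int m) has_vector_derivative cos (of_int m * t)) (at t within {0..2*pi})"
      by (simp add: has_real_derivative_iff_has_vector_derivative has_vector_derivative_at_within)
  qed simp
  moreover have "sin (of_int m * (2 * pi)) = 0"
    using sin_integer_2pi[of "of_int m"] by (simp add: mult_ac)
  ultimately show ?thesis using False by simp
qed (use has_integral_const_real[of "1::real" 0 "2 * pi"] in simp)

lemma has_integral_sin_int:
  fixes m :: int
  shows "((\<lambda>t. sin (of_int m * t)) has_integral 0) {0..2*pi}"
proof (cases "m = 0")
  case False
  have "((\<lambda>t. sin (of_int m * t)) has_integral (- cos (of_int m * (2 * pi)) / of_int m - - cos (of_int m * 0) / of_int m)) {0..2*pi}"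
  proof (rule fundamental_theorem_of_calculus)
    fix t :: real
    have "((\<lambda>t. - cos (of_int m * t) / of_int m) has_real_derivative sin (of_int m * t)) (at t)"
      by (rule derivative_eq_intros refl | use False in simp)+
    then show "((\<lambda>t. - cos (of_int m * t) / of_int m) has_vector_derivative sin (of_int m * t)) (at t within {0..2*pi})"
      by (simp add: has_real_derivative_iff_has_vector_derivative has_vector_derivative_at_within)
  qed simp
  moreover have "cos (of_int m * (2 * pi)) = 1"
    using cos_integer_2pi[of "of_int m"] by (simp add: mult_ac)
  ultimately show ?thesis by simp
qed simp

locale complex_hilbert_space =
  fixes J :: "'a::{real_inner, complete_space} \<Rightarrow> 'a"
  assumes complex_structure: "complex_structure J"
begin

lemma linear_J: "linear J"
  using complex_structure unfolding complex_structure_def by blast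

lemma J_J [simp]: "J (J v) = - v"
  using complex_structure unfolding complex_structure_def by blast

lemma inner_J_J [simp]: "inner (J u) (J v) = inner u v"
  using complex_structure unfolding complex_structure_def by blast

lemma J_add [simp]: "J (u + v) = J u + J v"
  using linear_J by (rule linear_add)

lemma J_scaleR [simp]: "J (a *\<^sub>R v) = a *\<^sub>R J v"
  using linear_J by (rule linear_scale)

lemma J_diff [simp]: "J (u - v) = J u - J v"
  using linear_J by (rule linear_diff)

lemma inner_J_left: "inner (J u) v = - inner u (J v)"
  using inner_J_J[of "J u" v] by simp

lemma cscale_mult: "cscale J (z * w) v = cscale J z (cscale J w v)"
  by (simp add: cscale_def algebra_simps)

lemma cscale_of_real [simp]: "cscale J (complex_of_real a) v = a *\<^sub>R v"
  by (simp add: cscale_def)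

lemma cscale_one [simp]: "cscale J 1 v = v"
  by (simp add: cscale_def)

lemma cscale_diff: "cscale J z (u - v) = cscale J z u - cscale J z v"
  by (simp add: cscale_def algebra_simps)

lemma bounded_linear_cscale: "bounded_linear (cscale J z)"
proof -
  have "bounded_linear J"
    by (rule bounded_linear_intro[where K = 1]) (simp_all add: norm_eq_sqrt_inner)
  then show ?thesis
    unfolding cscale_def
    by (intro bounded_linear_add bounded_linear_scaleR_right bounded_linear_ident
        bounded_linear_compose[OF bounded_linear_scaleR_right])
qed

lemma inner_cscale_cis:
  "inner (cscale J (cis a) v) (cscale J (cis b) w) = cos (a - b) * inner v w - sin (a - b) * inner v (J w)"
  by (simp add: cscale_def inner_J_left cos_diff sin_diff algebra_simps)

lemma norm_cscale: "norm (cscale J z v) = cmod z * norm v"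
proof -
  have "(norm (cscale J z v))\<^sup>2 = inner (cscale J z v) (cscale J z v)"
    by (rule power2_norm_eq_inner)
  also have "\<dots> = ((Re z)\<^sup>2 + (Im z)\<^sup>2) * inner v v"
    unfolding cscale_def
    by (simp add: inner_J_left[of v v] inner_commute[of "J v" v] algebra_simps power2_eq_square)
  also have "\<dots> = (cmod z * norm v)\<^sup>2"
    by (simp add: cmod_power2 power_mult_distrib power2_norm_eq_inner)
  finally show ?thesis by simp
qed

lemma has_integral_inner_cscale_cis:
  fixes m n :: int
  shows "((\<lambda>t. inner (cscale J (cis (of_int m * t)) v) (cscale J (cis (of_int n * t)) w))
      has_integral (if m = n then 2 * pi * inner v w else 0)) {0..2*pi}"
proof -
  have integrand: "(\<lambda>t. inner (cscale J (cis (of_int m * t)) v) (cscale J (cis (of_int n * t)) w))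
      = (\<lambda>t. inner v w * cos (of_int (m - n) * t) - inner v (J w) * sin (of_int (m - n) * t))"
    by (simp add: inner_cscale_cis left_diff_distrib right_diff_distrib mult.commute)
  have integral: "inner v w * (if m - n = 0 then 2 * pi else 0) - inner v (J w) * 0
      = (if m = n then 2 * pi * inner v w else 0)"
    by (simp add: mult.commute)
  have "((\<lambda>t. inner v w * cos (of_int (m - n) * t) - inner v (J w) * sin (of_int (m - n) * t))
      has_integral (inner v w * (if m - n = 0 then 2 * pi else 0) - inner v (J w) * 0)) {0..2*pi}"
    by (intro has_integral_diff has_integral_mult_right has_integral_cos_int has_integral_sin_int)
  then show ?thesis
    unfolding integrand integral .
qed

lemma has_integral_norm_sum_cscale_cis:
  fixes m :: "nat \<Rightarrow> int"
  assumes "inj m"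
  shows "((\<lambda>t. (norm (\<Sum>k<N. cscale J (cis (of_int (m k) * t)) (v k)))\<^sup>2)
      has_integral 2 * pi * (\<Sum>k<N. (norm (v k))\<^sup>2)) {0..2*pi}"
proof -
  let ?f = "\<lambda>k t. cscale J (cis (of_int (m k) * t)) (v k)"
  have expand: "(norm (\<Sum>k<N. ?f k t))\<^sup>2 = (\<Sum>j<N. \<Sum>k<N. inner (?f j t) (?f k t))" for t
    by (simp add: power2_norm_eq_inner inner_sum_left inner_sum_right) (rule sum.swap)
  have "((\<lambda>t. \<Sum>j<N. \<Sum>k<N. inner (?f j t) (?f k t))
      has_integral (\<Sum>j<N. \<Sum>k<N. if m j = m k then 2 * pi * inner (v j) (v k) else 0)) {0..2*pi}"
    by (intro has_integral_sum finite_lessThan has_integral_inner_cscale_cis)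
  moreover have "(\<Sum>j<N. \<Sum>k<N. if m j = m k then 2 * pi * inner (v j) (v k) else 0)
      = 2 * pi * (\<Sum>k<N. (norm (v k))\<^sup>2)"
    using assms by (simp add: inj_eq sum_distrib_left power2_norm_eq_inner)
  ultimately show ?thesis
    unfolding expand by simp
qed

lemma has_integral_norm_suminf_cscale_cis:
  fixes m :: "nat \<Rightarrow> int"
  assumes "inj m" and summable: "summable (\<lambda>k. norm (v k))"
  shows "((\<lambda>t. (norm (\<Sum>k. cscale J (cis (of_int (m k) * t)) (v k)))\<^sup>2)
      has_integral 2 * pi * (\<Sum>k. (norm (v k))\<^sup>2)) {0..2*pi}"
proof -
  define f where "f k t = cscale J (cis (of_int (m k) * t)) (v k)" for k t
  have uniform: "uniform_limit {0..2*pi} (\<lambda>N t. (norm (\<Sum>k<N. f k t))\<^sup>2) (\<lambda>t. (norm (\<Sum>k. f k t))\<^sup>2) sequentially"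
    using summable by (rule uniform_limit_norm_sq_partial_sums) (simp add: f_def norm_cscale)
  have continuous: "continuous_on {0..2*pi} (\<lambda>t. (norm (\<Sum>k<N. f k t))\<^sup>2)" for N
    unfolding f_def cscale_def by (intro continuous_intros)
  obtain I L where I: "\<And>N. ((\<lambda>t. (norm (\<Sum>k<N. f k t))\<^sup>2) has_integral I N) {0..2*pi}"
    and L: "((\<lambda>t. (norm (\<Sum>k. f k t))\<^sup>2) has_integral L) {0..2*pi}" and "I \<longlonglongrightarrow> L"
    using uniform_limit_integral[OF uniform continuous] by auto
  have "I N = 2 * pi * (\<Sum>k<N. (norm (v k))\<^sup>2)" for N
    using has_integral_unique[OF I[of N, unfolded f_def] has_integral_norm_sum_cscale_cis[OF \<open>inj m\<close>]] .
  then have "I = (\<lambda>N. 2 * pi * (\<Sum>k<N. (norm (v k))\<^sup>2))" ..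
  moreover have "summable (\<lambda>k. (norm (v k))\<^sup>2)"
  proof (rule summable_comparison_test_ev[OF _ summable])
    have "\<forall>\<^sub>F k in sequentially. norm (v k) < 1"
      using summable_LIMSEQ_zero[OF summable] by (rule order_tendstoD(2)) simp
    then show "\<forall>\<^sub>F k in sequentially. norm ((norm (v k))\<^sup>2) \<le> norm (v k)"
      by eventually_elim (simp add: power2_eq_square mult_left_le_one_le)
  qed
  then have "(\<lambda>N. 2 * pi * (\<Sum>k<N. (norm (v k))\<^sup>2)) \<longlonglongrightarrow> 2 * pi * (\<Sum>k. (norm (v k))\<^sup>2)"
    by (intro tendsto_mult_left summable_LIMSEQ)
  ultimately have "L = 2 * pi * (\<Sum>k. (norm (v k))\<^sup>2)"
    using LIMSEQ_unique \<open>I \<longlonglongrightarrow> L\<close> by blast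
  then show ?thesis
    using L unfolding f_def by simp
qed

end

section \<open>Power-bounded operators\<close>

locale power_bounded_operator = complex_hilbert_space J
  for J :: "'a::{real_inner, complete_space} \<Rightarrow> 'a" +
  fixes D :: "'a \<Rightarrow>\<^sub>L 'a" and C :: real
  assumes complex_linear: "complex_linear_op J D"
    and power_bound: "\<And>k y. norm ((blinfun_apply D ^^ k) y) \<le> C * norm y"
    and C_pos: "0 < C"
begin

lemma D_cscale: "D (cscale J z v) = cscale J z (D v)"
  using complex_linear unfolding complex_linear_op_def cscale_def
  by (simp add: blinfun.add_right blinfun.scaleR_right)

lemma norm_power_le:
  assumes "k \<le> n"
  shows "norm ((blinfun_apply D ^^ n) x) \<le> C * norm ((blinfun_apply D ^^ k) x)"
proof -
  have "n = (n - k) + k"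
    using assms by simp
  then have "(blinfun_apply D ^^ n) x = (blinfun_apply D ^^ (n - k)) ((blinfun_apply D ^^ k) x)"
    by (metis comp_apply funpow_add)
  then show ?thesis by (simp add: power_bound)
qed

text \<open>For \<open>\<bar>z\<bar> > 1\<close>, \<open>z v = D v\<close> gives \<open>v = z\<^sup>-\<^sup>n D\<^sup>n v\<close>, whose norm is at most \<open>\<bar>z\<bar>\<^sup>-\<^sup>n C \<parallel>v\<parallel> \<rightarrow> 0\<close>.\<close>
lemma cscale_eq_D_imp_zero:
  assumes z: "1 < cmod z" and eigen: "cscale J z v = D v"
  shows "v = 0"
proof -
  have z0: "z \<noteq> 0" using z by auto
  have v_eq: "v = cscale J (inverse z ^ n) ((blinfun_apply D ^^ n) v)" for n
  proof (induction n)
    case (Suc n)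
    have "v = cscale J (inverse z) (D v)"
      using eigen by (metis cscale_mult cscale_one left_inverse z0)
    also have "\<dots> = cscale J (inverse z) (D (cscale J (inverse z ^ n) ((blinfun_apply D ^^ n) v)))"
      using Suc.IH by simp
    also have "\<dots> = cscale J (inverse z ^ Suc n) ((blinfun_apply D ^^ Suc n) v)"
      by (simp add: D_cscale cscale_mult)
    finally show ?case .
  qed simp
  have le: "norm v \<le> inverse (cmod z) ^ n * (C * norm v)" for n
  proof -
    have "norm v = inverse (cmod z) ^ n * norm ((blinfun_apply D ^^ n) v)"
      by (subst v_eq[of n]) (simp add: norm_cscale norm_power norm_inverse)
    also have "\<dots> \<le> inverse (cmod z) ^ n * (C * norm v)"
      by (intro mult_left_mono power_bound) simp
    finally show ?thesis .
  qed
  have "(\<lambda>n. inverse (cmod z) ^ n * (C * norm v)) \<longlonglongrightarrow> 0 * (C * norm v)"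
    using z by (intro tendsto_mult LIMSEQ_realpow_zero tendsto_const) (auto simp: inverse_less_1_iff)
  then have "norm v \<le> 0"
    using le by (intro LIMSEQ_le_const) auto
  then show ?thesis by simp
qed

lemma summable_norm_neumann_terms:
  assumes "1 < cmod z"
  shows "summable (\<lambda>k. norm (cscale J (inverse z ^ Suc k) ((blinfun_apply D ^^ k) x)))"
proof -
  have q: "norm (inverse (cmod z)) < 1"
    using assms by (simp add: inverse_less_1_iff)
  have geometric: "summable (\<lambda>k. inverse (cmod z) ^ Suc k * (C * norm x))"
    unfolding power_Suc by (intro summable_mult2 summable_mult summable_geometric q)
  have "norm (norm (cscale J (inverse z ^ Suc k) ((blinfun_apply D ^^ k) x)))
      \<le> inverse (cmod z) ^ Suc k * (C * norm x)" for k
  proof -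
    have "norm (cscale J (inverse z ^ Suc k) ((blinfun_apply D ^^ k) x))
        = inverse (cmod z) ^ Suc k * norm ((blinfun_apply D ^^ k) x)"
      by (simp add: norm_cscale norm_power norm_inverse del: power_Suc)
    then show ?thesis
      using mult_left_mono[OF power_bound[of k x], of "inverse (cmod z) ^ Suc k"] by simp
  qed
  then show ?thesis
    by (rule summable_comparison_test'[OF geometric])
qed

lemma resolvent_eq_neumann_series:
  assumes z: "1 < cmod z"
  shows "resolvent J z D x = (\<Sum>k. cscale J (inverse z ^ Suc k) ((blinfun_apply D ^^ k) x))"
proof -
  define y where "y = (\<Sum>k. cscale J (inverse z ^ Suc k) ((blinfun_apply D ^^ k) x))"
  define f where "f k = cscale J (inverse z ^ k) ((blinfun_apply D ^^ k) x)" for k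
  have z0: "z \<noteq> 0" using z by auto
  have summable: "summable (\<lambda>k. cscale J (inverse z ^ Suc k) ((blinfun_apply D ^^ k) x))"
    by (rule summable_norm_cancel_complete[OF summable_norm_neumann_terms[OF z]])
  have scaled: "cscale J z (cscale J (inverse z ^ Suc k) ((blinfun_apply D ^^ k) x)) = f k" for k
    by (simp add: f_def cscale_mult[symmetric] z0 mult.assoc[symmetric])
  have "cscale J z y = (\<Sum>k. cscale J z (cscale J (inverse z ^ Suc k) ((blinfun_apply D ^^ k) x)))"
    unfolding y_def by (rule bounded_linear.suminf[OF bounded_linear_cscale summable])
  also have "\<dots> = (\<Sum>k. f k)"
    by (simp only: scaled)
  finally have "cscale J z y = (\<Sum>k. f k)" .
  moreover have "D y = (\<Sum>k. D (cscale J (inverse z ^ Suc k) ((blinfun_apply D ^^ k) x)))"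
    unfolding y_def by (rule bounded_linear.suminf[OF blinfun.bounded_linear_right summable])
  then have "D y = (\<Sum>k. f (Suc k))"
    by (simp only: f_def D_cscale funpow.simps comp_apply)
  moreover have "summable f"
    using bounded_linear.summable[OF bounded_linear_cscale[of z] summable] by (simp only: scaled)
  then have "(\<Sum>k. f (Suc k)) = (\<Sum>k. f k) - f 0"
    by (rule suminf_split_head)
  moreover have "f 0 = x"
    by (simp add: f_def)
  ultimately have solves: "cscale J z y - D y = x"
    by simp
  show ?thesis
    unfolding resolvent_def y_def[symmetric]
  proof (rule the_equality)
    fix y'
    assume "cscale J z y' - D y' = x"
    then have "cscale J z (y' - y) = D (y' - y)"
      using solves by (simp add: cscale_diff blinfun.diff_right algebra_simps)
    then show "y' = y"
      using cscale_eq_D_imp_zero[OF z] by fastforce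
  qed (rule solves)
qed

lemma integral_norm_resolvent_circle:
  assumes r: "1 < r"
  shows "integral {0..2*pi} (\<lambda>\<theta>. (norm (resolvent J (complex_of_real r * cis \<theta>) D x))\<^sup>2)
    = 2 * pi * weighted_sq_sum (\<lambda>k. norm ((blinfun_apply D ^^ k) x)) r"
proof -
  define m where "m k = - (int k + 1)" for k
  define v where "v k = inverse r ^ Suc k *\<^sub>R (blinfun_apply D ^^ k) x" for k
  have "inj m" by (auto simp: m_def inj_def)
  have cmod: "cmod (complex_of_real r * cis \<theta>) = r" for \<theta>
    using r by (simp add: norm_mult)
  have inverse_power: "inverse (complex_of_real r * cis \<theta>) ^ Suc k
      = cis (of_int (m k) * \<theta>) * complex_of_real (inverse r ^ Suc k)" for \<theta> k
  proof -
    have "inverse (complex_of_real r * cis \<theta>) = complex_of_real (inverse r) * cis (- \<theta>)"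
      by simp
    then have "inverse (complex_of_real r * cis \<theta>) ^ Suc k
        = complex_of_real (inverse r ^ Suc k) * cis (real (Suc k) * - \<theta>)"
      by (simp only: power_mult_distrib Complex.DeMoivre of_real_power)
    also have "real (Suc k) * - \<theta> = of_int (m k) * \<theta>"
      by (simp add: m_def algebra_simps)
    finally show ?thesis
      by (simp only: mult.commute)
  qed
  have "resolvent J (complex_of_real r * cis \<theta>) D x = (\<Sum>k. cscale J (cis (of_int (m k) * \<theta>)) (v k))" for \<theta>
  proof -
    have "resolvent J (complex_of_real r * cis \<theta>) D x
        = (\<Sum>k. cscale J (inverse (complex_of_real r * cis \<theta>) ^ Suc k) ((blinfun_apply D ^^ k) x))"
      using cmod r by (intro resolvent_eq_neumann_series) simp
    also have "\<dots> = (\<Sum>k. cscale J (cis (of_int (m k) * \<theta>)) (v k))"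
      by (simp only: inverse_power cscale_mult cscale_of_real v_def)
    finally show ?thesis .
  qed
  moreover have "summable (\<lambda>k. norm (v k))"
  proof -
    have "norm (v k) = norm (cscale J (inverse (complex_of_real r) ^ Suc k) ((blinfun_apply D ^^ k) x))" for k
      using r by (simp add: v_def norm_cscale norm_power norm_inverse del: power_Suc)
    then show ?thesis
      using summable_norm_neumann_terms[of "complex_of_real r"] r by simp
  qed
  ultimately have "((\<lambda>\<theta>. (norm (resolvent J (complex_of_real r * cis \<theta>) D x))\<^sup>2)
      has_integral 2 * pi * (\<Sum>k. (norm (v k))\<^sup>2)) {0..2*pi}"
    using has_integral_norm_suminf_cscale_cis[OF \<open>inj m\<close>] by simp
  moreover have "(norm (v k))\<^sup>2 = inverse r ^ (2 * k + 2) * (norm ((blinfun_apply D ^^ k) x))\<^sup>2" for k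
  proof -
    have "(inverse r ^ Suc k)\<^sup>2 = inverse r ^ (2 * k + 2)"
      unfolding power_mult[symmetric] by (simp add: algebra_simps)
    then show ?thesis
      using r by (simp add: v_def power_mult_distrib del: power_Suc)
  qed
  ultimately show ?thesis
    by (simp add: integral_unique weighted_sq_sum_def)
qed

lemma resolvent_cond_iff:
  "resolvent_cond J D x \<delta> \<longleftrightarrow>
    ((\<lambda>r. Lambda \<delta> r * weighted_sq_sum (\<lambda>k. norm ((blinfun_apply D ^^ k) x)) r) \<longlongrightarrow> 0) (at_right 1)"
proof -
  let ?G = "\<lambda>r. Lambda \<delta> r * weighted_sq_sum (\<lambda>k. norm ((blinfun_apply D ^^ k) x)) r"
  have "\<forall>\<^sub>F r in at_right 1. Lambda \<delta> r * integral {0..2*pi}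
      (\<lambda>\<theta>. (norm (resolvent J (complex_of_real r * cis \<theta>) D x))\<^sup>2) = 2 * pi * ?G r"
    using eventually_at_right_less[of "1::real"]
    by eventually_elim (simp add: integral_norm_resolvent_circle)
  then have "resolvent_cond J D x \<delta> \<longleftrightarrow> ((\<lambda>r. 2 * pi * ?G r) \<longlongrightarrow> 2 * pi * 0) (at_right 1)"
    unfolding resolvent_cond_def by (simp add: tendsto_cong)
  also have "\<dots> \<longleftrightarrow> (?G \<longlongrightarrow> 0) (at_right 1)"
    by (rule tendsto_mult_left_iff) simp
  finally show ?thesis .
qed

theorem resolvent_cond_if_little_o:
  assumes "0 < \<delta>" "\<delta> \<le> 1/2"
    and "little_o (\<lambda>k. norm ((blinfun_apply D ^^ k) x)) (\<lambda>k. real k powr (-\<delta>))"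
  shows "resolvent_cond J D x \<delta>"
  unfolding resolvent_cond_iff
  using Lambda_weighted_sq_sum_tendsto_0[OF assms(1,2) norm_ge_zero power_bound assms(3)] .

theorem little_o_if_resolvent_cond:
  assumes "0 < \<delta>" "\<delta> < 1/2" and "resolvent_cond J D x \<delta>"
  shows "little_o (\<lambda>k. norm ((blinfun_apply D ^^ k) x)) (\<lambda>k. real k powr (-\<delta>))"
  using assms(3) unfolding resolvent_cond_iff
  using little_o_powr_of_Lambda_weighted_sq_sum[OF norm_ge_zero norm_power_le C_pos assms(1,2)] by simp

theorem little_o_sqrt_ln_if_resolvent_cond:
  assumes "resolvent_cond J D x (1/2)"
  shows "little_o (\<lambda>k. norm ((blinfun_apply D ^^ k) x)) (\<lambda>k. sqrt (ln (real k) / real k))"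
  using assms unfolding resolvent_cond_iff
  using little_o_sqrt_ln_of_Lambda_weighted_sq_sum[OF norm_ge_zero norm_power_le C_pos] by simp

end

lemma power_bounded_obtains_pos_bound:
  assumes "power_bounded D"
  obtains C where "0 < C" "\<And>k y. norm ((blinfun_apply D ^^ k) y) \<le> C * norm y"
proof -
  obtain C0 where C0: "\<And>k y. norm ((blinfun_apply D ^^ k) y) \<le> C0 * norm y"
    using assms unfolding power_bounded_def by blast
  have "norm ((blinfun_apply D ^^ k) y) \<le> max C0 1 * norm y" for k y
    using C0[of k y] mult_right_mono[of C0 "max C0 1" "norm y"] by simp
  then show ?thesis
    using that[of "max C0 1"] by simp
qed

theorem mainTheorem3:
  fixes J :: "'a::{real_inner, complete_space} \<Rightarrow> 'a"
    and D :: "'a \<Rightarrow>\<^sub>L 'a" and x :: 'a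
  assumes "complex_structure J"
    and "complex_linear_op J D"
    and "power_bounded D"
  shows "(\<forall>\<delta>. 0 < \<delta> \<and> \<delta> \<le> 1/2 \<and>
              little_o (\<lambda>k. norm ((blinfun_apply D ^^ k) x)) (\<lambda>k. real k powr (-\<delta>))
            \<longrightarrow> resolvent_cond J D x \<delta>)
       \<and> (\<forall>\<delta>. 0 < \<delta> \<and> \<delta> < 1/2 \<and> resolvent_cond J D x \<delta>
            \<longrightarrow> little_o (\<lambda>k. norm ((blinfun_apply D ^^ k) x)) (\<lambda>k. real k powr (-\<delta>)))
       \<and> (resolvent_cond J D x (1/2)
            \<longrightarrow> little_o (\<lambda>k. norm ((blinfun_apply D ^^ k) x)) (\<lambda>k. sqrt (ln (real k) / real k)))"
proof -
  obtain C where "0 < C" "\<And>k y. norm ((blinfun_apply D ^^ k) y) \<le> C * norm y"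
    using power_bounded_obtains_pos_bound[OF assms(3)] by metis
  then interpret power_bounded_operator J D C
    using assms(1,2) by unfold_locales
  show ?thesis
    using resolvent_cond_if_little_o little_o_if_resolvent_cond little_o_sqrt_ln_if_resolvent_cond
    by blast
qed

end
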